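(* Let $p$ be a prime, $a_1,a_2,a_3\in\mathbb{F}_p$, $s = 3+a_1+a_2+a_3$, and for $k\in\{1,2,3\}$ let $m_k:\mathbb{F}_p^3\to\mathbb{F}_p^3$ replace $x_k$ by $-x_k + s x_{k-1}x_{k+1} - a_{k+1}x_{k-1} - a_{k-1}x_{k+1}$ (indices modulo $3$), leaving the other two coordinates unchanged. If $x,y \in \mathbb{F}_p^3$ and $i \neq j$ satisfy $m_i x = y$ and $m_j x = y$, then $x = y$. *)

theory Defs
  imports "HOL-Analysis.Finite_Cartesian_Product" "HOL-Library.Numeral_Type"
    "HOL-Computational_Algebra.Primes"
begin

text \<open>Points of F_p^3 are vectors indexed by the type 3 (integers mod 3), so that
  index arithmetic k-1, k+1 is automatically modulo 3. The coefficients a_1,a_2,a_3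
  are likewise a vector indexed by 3.\<close>

definition sval :: "'a::field ^ 3 \<Rightarrow> 'a" where
  "sval a = 3 + a $ 1 + a $ 2 + a $ 3"

definition mmove :: "'a::field ^ 3 \<Rightarrow> 3 \<Rightarrow> 'a ^ 3 \<Rightarrow> 'a ^ 3" where
  "mmove a k x = (\<chi> i. if i = k then
       - x $ k + sval a * x $ (k - 1) * x $ (k + 1)
       - a $ (k + 1) * x $ (k - 1) - a $ (k - 1) * x $ (k + 1)
     else x $ i)"

end

theory Submission
  imports Defs
begin

lemma mmove_nth_other:
  assumes "i \<noteq> k"
  shows "mmove a k x $ i = x $ i"
  using assms by (simp add: mmove_def)

text \<open>Each move only alters its own coordinate, so two different moves with a common result
  can alter none.\<close>

theorem proposition1p3:
  fixes p :: nat and a x y :: "'a::{field,finite} ^ 3" and i j :: 3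
  assumes "prime p" and "CARD('a) = p"
    and "i \<noteq> j" and "mmove a i x = y" and "mmove a j x = y"
  shows "x = y"
proof (rule vec_eq_iff[THEN iffD2], intro allI)
  fix k :: 3
  have "k \<noteq> i \<or> k \<noteq> j"
    using \<open>i \<noteq> j\<close> by blast
  then show "x $ k = y $ k"
    using mmove_nth_other \<open>mmove a i x = y\<close> \<open>mmove a j x = y\<close> by metis
qed

end
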